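(* Let $(I,\leq)$ be a finite poset with a unique maximal element, and let $F,G\subseteq K_I$ be nonzero subfunctors of the constant functor $K_I$. Then the following are equivalent: (1) $F\preccurlyeq G$, i.e.\ $\mathrm{supp}(F)\supseteq\mathrm{supp}(G)$; (2) $\mathrm{Nat}(G,F)\neq0$; (3) $\dim\mathrm{Nat}(G,F)=1$.
   Context: $K$ is a field; $K_I\colon I\to\mathrm{vect}_K$ is the constant functor with value $K$ and identity transition maps. For a subfunctor $F\subseteq K_I$, $\mathrm{supp}(F)=\{v\in I\mid F(v)\neq0\}$. $\mathrm{Nat}(G,F)$ denotes the $K$-vector space of natural transformations $G\to F$. *)

theory Defs
  imports Complex_Main "HOL-Library.Function_Algebras"
begin

text \<open>A subfunctor F of the constant functor K_I (value K, identity transition maps),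
  for I a poset given by the order on the type 'i and K a field 'k:
  each F v is a K-subspace of K, and for v \<le> w the identity transition map
  K(v) \<rightarrow> K(w) restricts to F(v) \<rightarrow> F(w), i.e. F v \<subseteq> F w.\<close>

definition is_subspace_K :: "'k::field set \<Rightarrow> bool" where
  "is_subspace_K S \<longleftrightarrow> 0 \<in> S \<and> (\<forall>x\<in>S. \<forall>y\<in>S. x + y \<in> S) \<and> (\<forall>c. \<forall>x\<in>S. c * x \<in> S)"

definition subfunctor_const :: "('i::order \<Rightarrow> 'k::field set) \<Rightarrow> bool" where
  "subfunctor_const F \<longleftrightarrow> (\<forall>v. is_subspace_K (F v)) \<and> (\<forall>v w. v \<le> w \<longrightarrow> F v \<subseteq> F w)"

definition zero_functor :: "'i \<Rightarrow> 'k::field set" where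
  "zero_functor = (\<lambda>v. {0})"

definition supp :: "('i \<Rightarrow> 'k::field set) \<Rightarrow> 'i set" where
  "supp F = {v. F v \<noteq> {0}}"

text \<open>A component
  eta v : G v \<rightarrow> F v is represented by a function 'k \<Rightarrow> 'k that is K-linear on G v,
  maps G v into F v and is (extensionally) 0 outside G v.  Naturality w.r.t. the
  identity transition maps: for v \<le> w and x \<in> G v, eta w x = eta v x.\<close>

definition nat_trans :: "('i::order \<Rightarrow> 'k::field set) \<Rightarrow> ('i \<Rightarrow> 'k set) \<Rightarrow> ('i \<Rightarrow> 'k \<Rightarrow> 'k) \<Rightarrow> bool" where
  "nat_trans G F \<eta> \<longleftrightarrow>
     (\<forall>v x. x \<notin> G v \<longrightarrow> \<eta> v x = 0) \<and>
     (\<forall>v. \<forall>x\<in>G v. \<eta> v x \<in> F v) \<and>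
     (\<forall>v. \<forall>x\<in>G v. \<forall>y\<in>G v. \<eta> v (x + y) = \<eta> v x + \<eta> v y) \<and>
     (\<forall>v c. \<forall>x\<in>G v. \<eta> v (c * x) = c * \<eta> v x) \<and>
     (\<forall>v w. v \<le> w \<longrightarrow> (\<forall>x\<in>G v. \<eta> w x = \<eta> v x))"

definition Nat :: "('i::order \<Rightarrow> 'k::field set) \<Rightarrow> ('i \<Rightarrow> 'k set) \<Rightarrow> ('i \<Rightarrow> 'k \<Rightarrow> 'k) set" where
  "Nat G F = {\<eta>. nat_trans G F \<eta>}"

definition fscale :: "'k::field \<Rightarrow> ('i \<Rightarrow> 'k \<Rightarrow> 'k) \<Rightarrow> ('i \<Rightarrow> 'k \<Rightarrow> 'k)" where
  "fscale c \<eta> = (\<lambda>v x. c * \<eta> v x)"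

lemma vector_space_fscale: "vector_space (fscale :: 'k::field \<Rightarrow> _)"
  by unfold_locales (auto simp: fscale_def fun_eq_iff algebra_simps)

abbreviation dimK :: "('i \<Rightarrow> 'k::field \<Rightarrow> 'k) set \<Rightarrow> nat" where
  "dimK S \<equiv> vector_space.dim fscale S"

end

theory Submission
  imports Defs
begin

text \<open>Since every value of a subfunctor of \<open>K_I\<close> is \<open>0\<close> or \<open>K\<close>, the condition
  \<open>supp G \<subseteq> supp F\<close> just says \<open>G \<le> F\<close>, and then the inclusion \<open>G \<hookrightarrow> F\<close> is a nonzero natural
  transformation.  Conversely, by naturality every component of \<open>\<eta> : G \<rightarrow> F\<close> at a point of
  \<open>supp G\<close> agrees with the component at the greatest element \<open>m\<close>, so \<open>\<eta>\<close> is the inclusion scaled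
  by \<open>\<eta> m 1\<close>.  Hence \<open>Nat(G, F)\<close> is either \<open>0\<close> or the line spanned by the inclusion.\<close>

definition inclusion_trans :: "('i \<Rightarrow> 'k::field set) \<Rightarrow> 'i \<Rightarrow> 'k \<Rightarrow> 'k" where
  "inclusion_trans G = (\<lambda>v x. if x \<in> G v then x else 0)"

lemma is_subspace_K_cases:
  fixes X :: "'k::field set"
  assumes "is_subspace_K X"
  shows "X = {0} \<or> X = UNIV"
proof (cases "X \<subseteq> {0}")
  case True
  then show ?thesis using assms unfolding is_subspace_K_def by auto
next
  case False
  then obtain x where x: "x \<in> X" "x \<noteq> 0" by auto
  have "y \<in> X" for y
  proof -
    have "(y / x) * x \<in> X" using assms x unfolding is_subspace_K_def by blast
    then show ?thesis using x by simp
  qed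
  then show ?thesis by auto
qed

lemma subfunctor_const_cases:
  "subfunctor_const F \<Longrightarrow> F v = {0} \<or> F v = UNIV"
  unfolding subfunctor_const_def by (rule is_subspace_K_cases) (erule conjunct1 [THEN spec])

lemma subfunctor_const_mono:
  "subfunctor_const F \<Longrightarrow> v \<le> w \<Longrightarrow> F v \<subseteq> F w"
  unfolding subfunctor_const_def by blast

lemma zero_in_subfunctor_const:
  "subfunctor_const F \<Longrightarrow> 0 \<in> F v"
  unfolding subfunctor_const_def is_subspace_K_def by blast

lemma in_supp_subfunctor_const_iff:
  fixes F :: "'i::order \<Rightarrow> 'k::field set"
  assumes "subfunctor_const F"
  shows "v \<in> supp F \<longleftrightarrow> F v = UNIV"
proof -
  have "(UNIV :: 'k set) \<noteq> {0}" by (metis UNIV_I one_neq_zero singletonD)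
  then show ?thesis using subfunctor_const_cases[OF assms] unfolding supp_def by auto
qed

lemma supp_subset_iff_le:
  assumes F: "subfunctor_const F" and G: "subfunctor_const G"
  shows "supp G \<subseteq> supp F \<longleftrightarrow> G \<le> F"
proof
  assume supp: "supp G \<subseteq> supp F"
  have "G v \<subseteq> F v" for v
    using subfunctor_const_cases[OF G, of v] zero_in_subfunctor_const[OF F, of v]
      supp in_supp_subfunctor_const_iff[OF F, of v] in_supp_subfunctor_const_iff[OF G, of v]
    by auto
  then show "G \<le> F" by (simp add: le_fun_def)
next
  assume "G \<le> F"
  then show "supp G \<subseteq> supp F"
    using zero_in_subfunctor_const[OF G] unfolding supp_def le_fun_def by blast
qed

lemma unique_maximal_is_greatest:
  fixes m :: "'i::{finite, order}"
  assumes "\<exists>!m::'i. \<forall>x. m \<le> x \<longrightarrow> x = m" and "\<forall>x. m \<le> x \<longrightarrow> x = m"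
  shows "v \<le> m"
proof -
  obtain m' where "v \<le> m'" "\<forall>x. m' \<le> x \<longrightarrow> m' = x"
    using finite_has_maximal2[of "UNIV :: 'i set" v] by auto
  with assms show ?thesis by metis
qed

lemma nat_trans_zero:
  "subfunctor_const F \<Longrightarrow> nat_trans G F (\<lambda>v x. 0)"
  unfolding nat_trans_def by (simp add: zero_in_subfunctor_const)

lemma nat_trans_fscale:
  assumes "subfunctor_const F" "nat_trans G F \<eta>"
  shows "nat_trans G F (fscale c \<eta>)"
  using assms unfolding nat_trans_def subfunctor_const_def is_subspace_K_def fscale_def
  by (simp add: algebra_simps)

lemma nat_trans_inclusion:
  assumes "subfunctor_const G" "G \<le> F"
  shows "nat_trans G F (inclusion_trans G)"
proof -
  have "x \<in> G w" if "v \<le> w" "x \<in> G v" for v w x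
    using subfunctor_const_mono[OF assms(1) that(1)] that(2) by blast
  then show ?thesis
    using assms unfolding nat_trans_def inclusion_trans_def subfunctor_const_def
      is_subspace_K_def le_fun_def
    by auto
qed

lemma inclusion_trans_nonzero:
  assumes "subfunctor_const G" "G \<noteq> zero_functor"
  shows "inclusion_trans G \<noteq> (\<lambda>v x. 0)"
proof -
  obtain v where "G v \<noteq> {0}"
    using assms(2) unfolding zero_functor_def by (auto simp: fun_eq_iff)
  then have "G v = UNIV" using subfunctor_const_cases[OF assms(1)] by blast
  then have "inclusion_trans G v 1 = 1" by (simp add: inclusion_trans_def)
  then show ?thesis by (metis one_neq_zero)
qed

lemma nat_trans_outside:
  "nat_trans G F \<eta> \<Longrightarrow> x \<notin> G v \<Longrightarrow> \<eta> v x = 0"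
  by (simp add: nat_trans_def)

lemma nat_trans_into:
  "nat_trans G F \<eta> \<Longrightarrow> x \<in> G v \<Longrightarrow> \<eta> v x \<in> F v"
  by (simp add: nat_trans_def)

lemma nat_trans_scale:
  "nat_trans G F \<eta> \<Longrightarrow> x \<in> G v \<Longrightarrow> \<eta> v (c * x) = c * \<eta> v x"
  by (simp add: nat_trans_def)

lemma nat_trans_natural:
  "nat_trans G F \<eta> \<Longrightarrow> v \<le> w \<Longrightarrow> x \<in> G v \<Longrightarrow> \<eta> w x = \<eta> v x"
  by (simp add: nat_trans_def)

lemma nat_trans_eq_fscale_inclusion:
  fixes m :: "'i::order" and \<eta> :: "'i \<Rightarrow> 'k::field \<Rightarrow> 'k"
  assumes greatest: "\<forall>v. v \<le> m" and G: "subfunctor_const G" and \<eta>: "nat_trans G F \<eta>"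
  shows "\<eta> = fscale (\<eta> m 1) (inclusion_trans G)"
proof (intro ext)
  fix v x
  show "\<eta> v x = fscale (\<eta> m 1) (inclusion_trans G) v x"
  proof (cases "x \<in> G v")
    case True
    then consider "G v = UNIV" | "x = 0" using subfunctor_const_cases[OF G, of v] by blast
    then show ?thesis
    proof cases
      case 1
      have "\<eta> v x = x * \<eta> v 1" using nat_trans_scale[OF \<eta>, of 1 v x] 1 by simp
      moreover have "\<eta> m 1 = \<eta> v 1" using nat_trans_natural[OF \<eta>, of v m 1] 1 greatest by simp
      ultimately show ?thesis by (simp add: fscale_def inclusion_trans_def 1 mult.commute)
    next
      case 2
      have "\<eta> v 0 = 0" using nat_trans_scale[OF \<eta>, of 0 v 0] True 2 by simp
      then show ?thesis by (simp add: fscale_def inclusion_trans_def 2)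
    qed
  next
    case False
    then show ?thesis by (simp add: nat_trans_outside[OF \<eta>] fscale_def inclusion_trans_def)
  qed
qed

lemma nonzero_nat_trans_imp_le:
  fixes m :: "'i::order" and \<eta> :: "'i \<Rightarrow> 'k::field \<Rightarrow> 'k"
  assumes greatest: "\<forall>v. v \<le> m" and F: "subfunctor_const F" and G: "subfunctor_const G"
    and \<eta>: "nat_trans G F \<eta>" and nonzero: "\<eta> \<noteq> (\<lambda>v x. 0)"
  shows "G \<le> F"
proof -
  have \<eta>_eq: "\<eta> = fscale (\<eta> m 1) (inclusion_trans G)"
    using nat_trans_eq_fscale_inclusion[OF greatest G \<eta>] .
  with nonzero have "\<eta> m 1 \<noteq> 0" by (auto simp: fscale_def)
  have "supp G \<subseteq> supp F"
  proof
    fix v assume "v \<in> supp G"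
    then have "1 \<in> G v" using in_supp_subfunctor_const_iff[OF G] by blast
    then have "\<eta> v 1 \<in> F v" by (rule nat_trans_into[OF \<eta>])
    moreover have "\<eta> v 1 = \<eta> m 1"
      using nat_trans_natural[OF \<eta> spec[OF greatest, of v] \<open>1 \<in> G v\<close>] by simp
    ultimately show "v \<in> supp F" using \<open>\<eta> m 1 \<noteq> 0\<close> unfolding supp_def by auto
  qed
  then show ?thesis using supp_subset_iff_le[OF F G] by blast
qed

lemma Nat_eq_range_fscale_inclusion:
  fixes m :: "'i::order" and F G :: "'i \<Rightarrow> 'k::field set"
  assumes "\<forall>v. v \<le> m" "subfunctor_const F" "subfunctor_const G" "G \<le> F"
  shows "Nat G F = range (\<lambda>c. fscale c (inclusion_trans G))"
  using nat_trans_eq_fscale_inclusion[OF assms(1,3)]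
    nat_trans_fscale[OF assms(2) nat_trans_inclusion[OF assms(3,4)]]
  unfolding Nat_def by blast

lemma Nat_eq_zero:
  fixes m :: "'i::order" and F G :: "'i \<Rightarrow> 'k::field set"
  assumes "\<forall>v. v \<le> m" "subfunctor_const F" "subfunctor_const G" "\<not> G \<le> F"
  shows "Nat G F = {\<lambda>v x. 0}"
  using nonzero_nat_trans_imp_le[OF assms(1-3)] nat_trans_zero[OF assms(2)] assms(4)
  unfolding Nat_def by blast

theorem proposition6p1:
  fixes F G :: "'i::{finite, order} \<Rightarrow> 'k::field set"
  assumes unique_max: "\<exists>!m::'i. \<forall>x. m \<le> x \<longrightarrow> x = m"
    and F: "subfunctor_const F" and G: "subfunctor_const G"
    and F_nz: "F \<noteq> zero_functor" and G_nz: "G \<noteq> zero_functor"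
  shows "(supp G \<subseteq> supp F \<longleftrightarrow> Nat G F \<noteq> {\<lambda>v x. 0})
       \<and> (Nat G F \<noteq> {\<lambda>v x. 0} \<longleftrightarrow> dimK (Nat G F) = 1)"
proof -
  interpret vs: vector_space "fscale :: 'k \<Rightarrow> ('i \<Rightarrow> 'k \<Rightarrow> 'k) \<Rightarrow> _"
    by (rule vector_space_fscale)
  obtain m :: 'i where "\<forall>x. m \<le> x \<longrightarrow> x = m" using unique_max by blast
  then have greatest: "\<forall>v. v \<le> m" using unique_maximal_is_greatest[OF unique_max] by blast
  let ?\<iota> = "inclusion_trans G"
  have \<iota>_nz: "?\<iota> \<noteq> 0" using inclusion_trans_nonzero[OF G G_nz] by (simp add: zero_fun_def)
  show ?thesis
  proof (cases "G \<le> F")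
    case True
    have "Nat G F = vs.span {?\<iota>}"
      using Nat_eq_range_fscale_inclusion[OF greatest F G True] by (simp add: vs.span_singleton)
    moreover have "dimK (vs.span {?\<iota>}) = 1"
      using vs.dim_span_eq_card_independent[of "{?\<iota>}"] \<iota>_nz by simp
    moreover have "?\<iota> \<in> vs.span {?\<iota>}" by (rule vs.span_base) simp
    ultimately show ?thesis using True supp_subset_iff_le[OF F G] \<iota>_nz
      by (auto simp: zero_fun_def)
  next
    case False
    have "dimK {0 :: 'i \<Rightarrow> 'k \<Rightarrow> 'k} = 0"
      using vs.dim_span_eq_card_independent[OF vs.independent_empty] by simp
    then show ?thesis
      using Nat_eq_zero[OF greatest F G False] supp_subset_iff_le[OF F G] False
      by (simp add: zero_fun_def)
  qed
qed

end
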